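(* Let $(X_j,X_l,Y)$ be a random vector with $X_j,X_l$ real-valued and $Y\in\{1,\dots,K\}$, and let $(X_{i,j},X_{i,l},Y_i)$, $i=1,\dots,n$, be independent and identically distributed copies of it; write $\mathbf{Y}=(Y_1,\dots,Y_n)$. For $k\in\{1,\dots,K\}$ let $(\tilde X_j,\tilde X_l,\tilde Y)$ be an independent copy of $(X_j,X_l,Y)$ and define the conditional Kendall's $\tau$ $$\tau_k(X_j,X_l)=2\,\mathbb{P}\big((X_j-\tilde X_j)(X_l-\tilde X_l)>0\mid Y=k,\tilde Y=k\big)-1,$$ let $n_k=\sum_{i=1}^n\mathbf{1}\{Y_i=k\}$, $\hat\pi_k=n_k/n$, and (whenever $n_k\ge 2$) $$\hat\tau_k(X_j,X_l)=\frac{4}{n_k(n_k-1)}\sum_{1\le i<t\le n}\mathbf{1}\{(X_{i,j}-X_{t,j})(X_{i,l}-X_{t,l})>0,\ Y_i=k,\ Y_t=k\}-1.$$ Then (i) $\mathbb{E}\big(\hat\pi_k\hat\tau_k(X_j,X_l)\mid \mathbf{Y}\big)=\hat\pi_k\tau_k(X_j,X_l)$; (ii) for all $\epsilon>0$, $\mathbb{P}\big(\hat\pi_k|\hat\tau_k(X_j,X_l)-\tau_k(X_j,X_l)|>\epsilon\mid \mathbf{Y}\big)\le 2\exp(-n\epsilon^2/8)$.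
   Context: No moment or distributional assumptions are imposed on $(X_j,X_l)$. *)

theory Defs
  imports "HOL-Probability.Probability"
begin

definition obs_space :: "(real \<times> real \<times> nat) measure" where
  "obs_space = borel \<Otimes>\<^sub>M borel \<Otimes>\<^sub>M count_space UNIV"

definition trip :: "('a \<Rightarrow> real) \<Rightarrow> ('a \<Rightarrow> real) \<Rightarrow> ('a \<Rightarrow> nat) \<Rightarrow> 'a \<Rightarrow> real \<times> real \<times> nat" where
  "trip A B C = (\<lambda>\<omega>. (A \<omega>, B \<omega>, C \<omega>))"

text \<open>Conditional Kendall tau of class k, computed from the law mu of (X_j,X_l,Y):
  an independent copy is realised by the product measure mu x mu, and the conditional
  probability given Y = k, Y~ = k is the ratio of the two product measures.\<close>
definition cond_tau :: "(real \<times> real \<times> nat) measure \<Rightarrow> nat \<Rightarrow> real" where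
  "cond_tau mu k =
     2 * (measure (mu \<Otimes>\<^sub>M mu)
            {(u, v). (fst u - fst v) * (fst (snd u) - fst (snd v)) > 0 \<and> snd (snd u) = k \<and> snd (snd v) = k}
          / measure (mu \<Otimes>\<^sub>M mu) {(u, v). snd (snd u) = k \<and> snd (snd v) = k}) - 1"

definition n_k :: "nat \<Rightarrow> (nat \<Rightarrow> 'a \<Rightarrow> nat) \<Rightarrow> nat \<Rightarrow> 'a \<Rightarrow> nat" where
  "n_k n Y k \<omega> = card {i \<in> {1..n}. Y i \<omega> = k}"

definition pi_hat :: "nat \<Rightarrow> (nat \<Rightarrow> 'a \<Rightarrow> nat) \<Rightarrow> nat \<Rightarrow> 'a \<Rightarrow> real" where
  "pi_hat n Y k \<omega> = real (n_k n Y k \<omega>) / real n"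

definition tau_hat :: "nat \<Rightarrow> (nat \<Rightarrow> 'a \<Rightarrow> real) \<Rightarrow> (nat \<Rightarrow> 'a \<Rightarrow> real) \<Rightarrow> (nat \<Rightarrow> 'a \<Rightarrow> nat)
    \<Rightarrow> nat \<Rightarrow> 'a \<Rightarrow> real" where
  "tau_hat n Xj Xl Y k \<omega> =
     4 / (real (n_k n Y k \<omega>) * (real (n_k n Y k \<omega>) - 1)) *
       (\<Sum>i\<in>{1..n}. \<Sum>t\<in>{i<..n}.
          (if (Xj i \<omega> - Xj t \<omega>) * (Xl i \<omega> - Xl t \<omega>) > 0 \<and> Y i \<omega> = k \<and> Y t \<omega> = k
           then 1 else 0)) - 1"

end

(*
  Conditioning on the labels Y = y, i.e. passing to the uniform measure on the event
  E = {Y_i = y_i for all i}, keeps the observations independent and gives those with label k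
  the law mu_k of an observation conditioned on Y = k.  On E, pi_hat * tau_hat equals
  (n_k / n) * U, where U is the U-statistic of the kernel h = +1 (concordant) / -1 (discordant)
  over the n_k observations with label k, and tau_k is the mean of h under mu_k x mu_k.

  For (ii) we follow Hoeffding: the pairs of {0..m-1} split into the round-robin classes
  a + b = c (mod m), each a matching of at least m/4 pairs.  So U - tau_k is a convex
  combination of averages of independent terms bounded by 1, and Jensen's inequality together
  with Hoeffding's lemma bounds its moment generating function by exp (2 l^2 / m).  Chernoff's
  bound gives P(|U - tau_k| >= t) <= 2 exp (-m t^2 / 8); take t = n eps / n_k and use n_k <= n.
*)

theory Submission
  imports Defs
begin

section \<open>Round-robin decomposition of the pairs of indices\<close>

definition index_pairs :: "nat \<Rightarrow> (nat \<times> nat) set" where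
  "index_pairs m = {(a, b). a < b \<and> b < m}"

definition round_robin_class :: "nat \<Rightarrow> nat \<Rightarrow> (nat \<times> nat) set" where
  "round_robin_class m c = {(a, b) \<in> index_pairs m. (a + b) mod m = c}"

lemma finite_index_pairs [simp]: "finite (index_pairs m)"
  by (rule finite_subset[of _ "{..<m} \<times> {..<m}"]) (auto simp: index_pairs_def)

lemma card_index_pairs: "2 * card (index_pairs m) = m * (m - 1)"
proof (induction m)
  case (Suc m)
  have "index_pairs (Suc m) = index_pairs m \<union> (\<lambda>a. (a, m)) ` {..<m}"
    by (auto simp: index_pairs_def)
  moreover have "index_pairs m \<inter> (\<lambda>a. (a, m)) ` {..<m} = {}"
    by (auto simp: index_pairs_def)
  then have "card (index_pairs m \<union> (\<lambda>a. (a, m)) ` {..<m}) = card (index_pairs m) + m"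
    by (simp add: card_Un_disjoint card_image inj_on_def)
  ultimately show ?case
    using Suc.IH by (cases m) (auto simp: algebra_simps)
qed (simp add: index_pairs_def)

lemma sum_index_pairs_by_class:
  assumes "0 < m"
  shows "(\<Sum>q\<in>index_pairs m. f q) = (\<Sum>c<m. \<Sum>q\<in>round_robin_class m c. f q)"
proof -
  have "{q \<in> index_pairs m. (fst q + snd q) mod m = c} = round_robin_class m c" for c
    by (auto simp: round_robin_class_def)
  moreover have "(\<lambda>q. (fst q + snd q) mod m) ` index_pairs m \<subseteq> {..<m}"
    using assms by auto
  ultimately show ?thesis
    using sum.group[of "index_pairs m" "{..<m}" "\<lambda>q. (fst q + snd q) mod m" f] by simp
qed

lemma round_robin_class_subset: "round_robin_class m c \<subseteq> index_pairs m"
  by (auto simp: round_robin_class_def)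

lemma finite_round_robin_class: "finite (round_robin_class m c)"
  using finite_index_pairs round_robin_class_subset by (rule finite_subset[rotated])

lemma sum_index_pairs_enumerate:
  fixes S :: "nat set"
  assumes "finite S"
  shows "(\<Sum>q\<in>index_pairs (card S). f (enumerate S (fst q), enumerate S (snd q)))
    = (\<Sum>p\<in>{p \<in> S \<times> S. fst p < snd p}. f p)"
proof (rule sum.reindex_bij_betw)
  let ?g = "\<lambda>q. (enumerate S (fst q), enumerate S (snd q))"
  have bij: "bij_betw (enumerate S) {..<card S} S"
    by (rule finite_bij_enumerate[OF assms])
  have less_iff: "enumerate S a < enumerate S b \<longleftrightarrow> a < b" if "a < card S" "b < card S" for a b
    using assms that by simp
  have "inj_on ?g (index_pairs (card S))"
    using bij_betw_imp_inj_on[OF bij] by (auto simp: inj_on_def index_pairs_def)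
  moreover have "?g ` index_pairs (card S) = {p \<in> S \<times> S. fst p < snd p}"
  proof (intro equalityI subsetI)
    fix p assume "p \<in> {p \<in> S \<times> S. fst p < snd p}"
    then obtain i t where p: "p = (i, t)" "i \<in> S" "t \<in> S" "i < t"
      by auto
    obtain a b where "a < card S" "i = enumerate S a" "b < card S" "t = enumerate S b"
      using bij p unfolding bij_betw_def by (metis imageE lessThan_iff)
    then show "p \<in> ?g ` index_pairs (card S)"
      using less_iff p by (auto simp: index_pairs_def image_iff)
  qed (use assms less_iff in \<open>auto simp: index_pairs_def finite_enumerate_in_set\<close>)
  ultimately show "bij_betw ?g (index_pairs (card S)) {p \<in> S \<times> S. fst p < snd p}"
    by (rule bij_betw_imageI)
qed

lemma mod_add_left_cancel_less:
  fixes x y y' m :: nat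
  assumes "y < m" "y' < m" "(x + y) mod m = (x + y') mod m"
  shows "y = y'"
proof (rule ccontr)
  assume "y \<noteq> y'"
  have "int m dvd (int x + int y) - (int x + int y')"
    using assms(3) by (metis mod_eq_dvd_iff of_nat_add zmod_int)
  then have "int m dvd int y - int y'"
    by simp
  with \<open>y \<noteq> y'\<close> have "\<bar>int m\<bar> \<le> \<bar>int y - int y'\<bar>"
    by (intro dvd_imp_le_int) auto
  with assms(1,2) show False
    by linarith
qed

definition round_robin_opponent :: "nat \<Rightarrow> nat \<Rightarrow> nat \<Rightarrow> nat" where
  "round_robin_opponent m c a = (c + m - a) mod m"

lemma round_robin_opponent_less: "0 < m \<Longrightarrow> round_robin_opponent m c a < m"
  by (simp add: round_robin_opponent_def)

lemma add_round_robin_opponent: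
  assumes "a < m" "c < m"
  shows "(a + round_robin_opponent m c a) mod m = c"
proof -
  have "(a + round_robin_opponent m c a) mod m = (a + (c + m - a)) mod m"
    by (simp add: round_robin_opponent_def mod_add_right_eq)
  also have "a + (c + m - a) = c + m"
    using assms by simp
  finally show ?thesis
    using assms by simp
qed

lemma round_robin_opponent_eqI:
  assumes "a < m" "b < m" "(a + b) mod m = c"
  shows "round_robin_opponent m c a = b"
proof -
  have "0 < m" "c < m"
    using assms by auto
  then have "(a + round_robin_opponent m c a) mod m = (a + b) mod m"
    using assms by (simp add: add_round_robin_opponent)
  then show ?thesis
    using mod_add_left_cancel_less round_robin_opponent_less[OF \<open>0 < m\<close>] assms(2) by blast
qed

lemma round_robin_opponent_opponent:
  assumes "a < m" "c < m"
  shows "round_robin_opponent m c (round_robin_opponent m c a) = a"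
  using assms add_round_robin_opponent[OF assms]
  by (intro round_robin_opponent_eqI) (auto simp: round_robin_opponent_less add.commute)

lemma round_robin_class_opponent:
  assumes "(a, b) \<in> round_robin_class m c"
  shows "b = round_robin_opponent m c a" "a = round_robin_opponent m c b"
  using assms
  by (auto simp: round_robin_class_def index_pairs_def add.commute
      intro!: round_robin_opponent_eqI[symmetric])

lemma round_robin_class_disjoint:
  "disjoint_family_on (\<lambda>q. {fst q, snd q}) (round_robin_class m c)"
  unfolding disjoint_family_on_def
proof (intro ballI impI)
  fix p q
  assume p: "p \<in> round_robin_class m c" and q: "q \<in> round_robin_class m c" and "p \<noteq> q"
  have pair_eq: "{fst r, snd r} = {u, round_robin_opponent m c u}"
    if "r \<in> round_robin_class m c" "u \<in> {fst r, snd r}" for r u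
  proof -
    obtain a b where "r = (a, b)"
      by (cases r)
    with that round_robin_class_opponent[of a b m c] show ?thesis
      by auto
  qed
  show "{fst p, snd p} \<inter> {fst q, snd q} = {}"
  proof (rule ccontr)
    assume "{fst p, snd p} \<inter> {fst q, snd q} \<noteq> {}"
    then obtain u where "u \<in> {fst p, snd p}" "u \<in> {fst q, snd q}"
      by blast
    then have "{fst p, snd p} = {fst q, snd q}"
      using pair_eq p q by metis
    moreover have "fst p < snd p" "fst q < snd q"
      using p q by (auto simp: round_robin_class_def index_pairs_def split: prod.splits)
    ultimately have "p = q"
      by (auto simp: doubleton_eq_iff prod_eq_iff)
    with \<open>p \<noteq> q\<close> show False ..
  qed
qed

lemma card_doubling_mod_le_2:
  fixes m c :: nat
  shows "card {a. a < m \<and> (a + a) mod m = c} \<le> 2"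
proof (cases "{a. a < m \<and> (a + a) mod m = c} = {}")
  case False
  define F where "F = {a. a < m \<and> (a + a) mod m = c}"
  define a0 where "a0 = Min F"
  have "finite F" "F \<noteq> {}"
    using False by (simp_all add: F_def)
  have "a \<in> {a0, a0 + m div 2}" if "a \<in> F" for a
  proof (cases "a = a0")
    case False
    have "a0 \<in> F" "a0 \<le> a"
      using \<open>finite F\<close> \<open>F \<noteq> {}\<close> \<open>a \<in> F\<close> by (simp_all add: a0_def)
    with False \<open>a \<in> F\<close> have "a0 < a" "a < m" "(a + a) mod m = (a0 + a0) mod m"
      by (auto simp: F_def)
    then have "m dvd (a + a) - (a0 + a0)"
      by (subst (asm) mod_eq_dvd_iff_nat) auto
    moreover have "(a + a) - (a0 + a0) = 2 * (a - a0)"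
      by simp
    ultimately obtain j where j: "2 * (a - a0) = m * j"
      by auto
    with \<open>a0 < a\<close> \<open>a < m\<close> have "m * j < m * 2" "0 < m * j"
      by linarith+
    then have "j = 1"
      by simp
    with j \<open>a0 < a\<close> show ?thesis
      by auto
  qed simp
  then have "card F \<le> card {a0, a0 + m div 2}"
    by (intro card_mono) auto
  also have "\<dots> \<le> 2"
    by (simp add: card_insert_if)
  finally show ?thesis
    by (simp add: F_def)
qed (simp only: card.empty)

lemma card_round_robin_class_ge:
  assumes "round_robin_class m c \<noteq> {}"
  shows "m \<le> 4 * card (round_robin_class m c)"
proof -
  \<comment> \<open>The opponent map is an involution of \<open>{..<m}\<close> with at most two fixed points.\<close>
  let ?opp = "round_robin_opponent m c"
  from assms have "c < m"
    by (auto simp: round_robin_class_def index_pairs_def)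
  define A where "A = {a. a < m \<and> a < ?opp a}"
  define B where "B = {a. a < m \<and> ?opp a < a}"
  define F where "F = {a. a < m \<and> ?opp a = a}"
  have class_eq: "round_robin_class m c = (\<lambda>a. (a, ?opp a)) ` A"
  proof (intro equalityI subsetI)
    fix p assume "p \<in> round_robin_class m c"
    then show "p \<in> (\<lambda>a. (a, ?opp a)) ` A"
      using round_robin_class_opponent[of "fst p" "snd p" m c]
      by (auto simp: A_def round_robin_class_def index_pairs_def image_iff)
  qed (use \<open>c < m\<close> in \<open>auto simp: A_def round_robin_class_def index_pairs_def
    round_robin_opponent_less add_round_robin_opponent\<close>)
  have "bij_betw ?opp A B"
    using \<open>c < m\<close> by (intro bij_betw_byWitness[where f' = ?opp])
      (auto simp: A_def B_def round_robin_opponent_opponent round_robin_opponent_less)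
  then have "card B = card A"
    by (simp add: bij_betw_same_card)
  have "(a + a) mod m = c" if "a \<in> F" for a
    using that add_round_robin_opponent[of a m c] \<open>c < m\<close> by (simp add: F_def)
  then have "card F \<le> card {a. a < m \<and> (a + a) mod m = c}"
    by (intro card_mono) (auto simp: F_def)
  then have "card F \<le> 2"
    using card_doubling_mod_le_2[of m c] by linarith
  have "m = card (A \<union> B \<union> F)"
    by (rule trans[OF card_lessThan[symmetric]], rule arg_cong[where f = card])
      (auto simp: A_def B_def F_def)
  also have "\<dots> = card A + card B + card F"
    by (subst card_Un_disjoint; auto simp: A_def B_def F_def)+
  finally have "m \<le> 2 * card A + 2"
    using \<open>card B = card A\<close> \<open>card F \<le> 2\<close> by linarith
  moreover have "card A \<ge> 1"
    using assms class_eq by (auto simp: Suc_le_eq card_gt_0_iff A_def)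
  moreover have "card (round_robin_class m c) = card A"
    unfolding class_eq by (rule card_image) (auto simp: inj_on_def)
  ultimately show ?thesis
    by linarith
qed

section \<open>Independence, pairs and conditioning on preimages\<close>

lemma (in prob_space) distr_pair_indep_vars:
  assumes indep: "indep_vars (\<lambda>_. N) X I" and "a \<in> I" "b \<in> I" "a \<noteq> b"
  shows "distr M (N \<Otimes>\<^sub>M N) (\<lambda>\<omega>. (X a \<omega>, X b \<omega>)) = distr M N (X a) \<Otimes>\<^sub>M distr M N (X b)"
proof -
  have "indep_var (Pi\<^sub>M {a} (\<lambda>_. N)) (\<lambda>\<omega>. restrict (\<lambda>i. X i \<omega>) {a})
      (Pi\<^sub>M {b} (\<lambda>_. N)) (\<lambda>\<omega>. restrict (\<lambda>i. X i \<omega>) {b})"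
    using assms by (intro indep_var_restrict[OF indep]) auto
  then have "indep_var N ((\<lambda>f. f a) \<circ> (\<lambda>\<omega>. restrict (\<lambda>i. X i \<omega>) {a}))
      N ((\<lambda>f. f b) \<circ> (\<lambda>\<omega>. restrict (\<lambda>i. X i \<omega>) {b}))"
    by (rule indep_var_compose) auto
  then have "indep_var N (X a) N (X b)"
    by (simp add: comp_def)
  then show ?thesis
    by (simp add: indep_var_distribution_eq)
qed

lemma (in prob_space) indep_vars_disjoint_pairs:
  assumes indep: "indep_vars (\<lambda>_. N) X I" and "Q \<subseteq> I \<times> I"
    and disj: "disjoint_family_on (\<lambda>q. {fst q, snd q}) Q"
    and g: "\<And>q. q \<in> Q \<Longrightarrow> g q \<in> borel_measurable (N \<Otimes>\<^sub>M N)"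
  shows "indep_vars (\<lambda>_. borel) (\<lambda>q \<omega>. g q (X (fst q) \<omega>, X (snd q) \<omega>)) Q"
proof -
  have "indep_vars (\<lambda>q. Pi\<^sub>M {fst q, snd q} (\<lambda>_. N))
      (\<lambda>q \<omega>. restrict (\<lambda>i. X i \<omega>) {fst q, snd q}) Q"
    using assms by (intro indep_vars_restrict[OF indep]) auto
  moreover have "(\<lambda>f. g q (f (fst q), f (snd q))) \<in> borel_measurable (Pi\<^sub>M {fst q, snd q} (\<lambda>_. N))"
    if "q \<in> Q" for q
    using g[OF that] by measurable
  ultimately have "indep_vars (\<lambda>_. borel)
      (\<lambda>q \<omega>. (\<lambda>f. g q (f (fst q), f (snd q))) (restrict (\<lambda>i. X i \<omega>) {fst q, snd q})) Q"
    by (rule indep_vars_compose2)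
  then show ?thesis
    by simp
qed

lemma (in prob_space) indep_vars_reindex:
  assumes indep: "indep_vars N X I" and f: "inj_on f J" "f ` J \<subseteq> I"
  shows "indep_vars (\<lambda>j. N (f j)) (\<lambda>j. X (f j)) J"
  unfolding indep_vars_def2
proof (intro conjI ballI indep_setsI)
  show "random_variable (N (f j)) (X (f j))" if "j \<in> J" for j
    using indep f that by (auto simp: indep_vars_def)
  then show "{X (f j) -` A \<inter> space M |A. A \<in> sets (N (f j))} \<subseteq> events" if "j \<in> J" for j
    using that by (auto intro: measurable_sets)
  fix C K assume K: "K \<noteq> {}" "K \<subseteq> J" "finite K"
    and C: "\<forall>j\<in>K. C j \<in> {X (f j) -` A \<inter> space M |A. A \<in> sets (N (f j))}"
  define C' where "C' i = C (the_inv_into J f i)" for i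
  have C'_f: "C' (f j) = C j" if "j \<in> K" for j
    using f K that by (auto simp: C'_def the_inv_into_f_f)
  have inj: "inj_on f K"
    using f(1) K(2) by (rule inj_on_subset)
  have "prob (\<Inter>i\<in>f ` K. C' i) = (\<Prod>i\<in>f ` K. prob (C' i))"
  proof (rule indep_setsD[OF indep[unfolded indep_vars_def2, THEN conjunct2]])
    show "\<forall>i\<in>f ` K. C' i \<in> {X i -` A \<inter> space M |A. A \<in> sets (N i)}"
      using C C'_f by auto
  qed (use K f in auto)
  then show "prob (\<Inter>j\<in>K. C j) = (\<Prod>j\<in>K. prob (C j))"
    using C'_f by (simp add: prod.reindex[OF inj])
qed

lemma measurable_uniform_measure: "measurable (uniform_measure M E) N = measurable M N"
  by (rule measurable_cong_sets) simp_all

context prob_space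
begin

context
  fixes N :: "'i \<Rightarrow> 'b measure" and X :: "'i \<Rightarrow> 'a \<Rightarrow> 'b" and I :: "'i set"
    and A :: "'i \<Rightarrow> 'b set" and E :: "'a set"
  assumes indep: "indep_vars N X I" and "finite I"
    and A: "\<And>i. i \<in> I \<Longrightarrow> A i \<in> sets (N i)"
    and E: "E = {\<omega> \<in> space M. \<forall>i\<in>I. X i \<omega> \<in> A i}" and "prob E \<noteq> 0"
begin

lemma prob_space_uniform_measure_preimages: "prob_space (uniform_measure M E)"
  using \<open>prob E \<noteq> 0\<close> measure_notin_sets
  by (intro prob_space_uniform_measure) (auto simp: emeasure_eq_measure)

lemma measure_uniform_measure_indep_vars:
  assumes J: "J \<subseteq> I" "J \<noteq> {}" and B: "\<And>j. j \<in> J \<Longrightarrow> B j \<in> sets (N j)"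
  shows "measure (uniform_measure M E) (\<Inter>j\<in>J. X j -` B j \<inter> space M) =
    (\<Prod>j\<in>J. prob (X j -` (A j \<inter> B j) \<inter> space M) / prob (X j -` A j \<inter> space M))"
proof -
  have X: "X i \<in> measurable M (N i)" if "i \<in> I" for i
    using indep that by (auto simp: indep_vars_def)
  have "I \<noteq> {}"
    using J by auto
  define A' where "A' i = (if i \<in> J then A i \<inter> B i else A i)" for i
  have A'_sets: "A' i \<in> sets (N i)" if "i \<in> I" for i
    using A B that by (auto simp: A'_def)
  have E_eq: "E = (\<Inter>i\<in>I. X i -` A i \<inter> space M)"
    using \<open>I \<noteq> {}\<close> by (auto simp: E)
  have "E \<in> events"
    unfolding E_eq using \<open>finite I\<close> \<open>I \<noteq> {}\<close> X A by (intro sets.finite_INT) auto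
  have prob_E: "prob E = (\<Prod>i\<in>I. prob (X i -` A i \<inter> space M))"
    unfolding E_eq using A by (rule indep_varsD_finite[OF indep \<open>I \<noteq> {}\<close> \<open>finite I\<close>])
  have "(\<Inter>j\<in>J. X j -` B j \<inter> space M) \<in> events"
    using J B X \<open>finite I\<close> by (intro sets.finite_INT) (auto intro: finite_subset)
  then have "measure (uniform_measure M E) (\<Inter>j\<in>J. X j -` B j \<inter> space M) =
      prob (E \<inter> (\<Inter>j\<in>J. X j -` B j \<inter> space M)) / prob E"
    using \<open>prob E \<noteq> 0\<close> by (simp add: emeasure_eq_measure)
  also have "E \<inter> (\<Inter>j\<in>J. X j -` B j \<inter> space M) = (\<Inter>i\<in>I. X i -` A' i \<inter> space M)"
    using J by (auto simp: E_eq A'_def split: if_splits)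
  also have "prob (\<Inter>i\<in>I. X i -` A' i \<inter> space M) = (\<Prod>i\<in>I. prob (X i -` A' i \<inter> space M))"
    using A'_sets by (rule indep_varsD_finite[OF indep \<open>I \<noteq> {}\<close> \<open>finite I\<close>])
  also have "(\<Prod>i\<in>I. prob (X i -` A' i \<inter> space M)) / prob E =
      (\<Prod>i\<in>I. prob (X i -` A' i \<inter> space M) / prob (X i -` A i \<inter> space M))"
    unfolding prob_E by (rule prod_dividef[symmetric])
  also have "\<dots> = (\<Prod>j\<in>J. prob (X j -` (A j \<inter> B j) \<inter> space M) / prob (X j -` A j \<inter> space M))"
  proof -
    have "prob (X i -` A i \<inter> space M) \<noteq> 0" if "i \<in> I" for i
      using that prob_E \<open>prob E \<noteq> 0\<close> \<open>finite I\<close> by auto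
    then show ?thesis
      using \<open>finite I\<close> J(1) by (intro prod.mono_neutral_cong_right) (auto simp: A'_def)
  qed
  finally show ?thesis .
qed

lemma indep_vars_uniform_measure: "prob_space.indep_vars (uniform_measure M E) N X I"
proof -
  interpret E: prob_space "uniform_measure M E"
    by (rule prob_space_uniform_measure_preimages)
  show ?thesis
    unfolding E.indep_vars_def2
  proof (intro conjI ballI E.indep_setsI)
    have X: "X i \<in> measurable M (N i)" if "i \<in> I" for i
      using indep that by (simp add: indep_vars_def)
    then show "X i \<in> measurable (uniform_measure M E) (N i)" if "i \<in> I" for i
      using that by (simp add: measurable_uniform_measure)
    show "{X i -` B \<inter> space (uniform_measure M E) |B. B \<in> sets (N i)} \<subseteq> E.events"
      if "i \<in> I" for i
      using X[OF that] by (auto intro: measurable_sets)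
    fix C J assume J: "J \<noteq> {}" "J \<subseteq> I" "finite J"
      and C: "\<forall>j\<in>J. C j \<in> {X j -` B \<inter> space (uniform_measure M E) |B. B \<in> sets (N j)}"
    then have "\<forall>j\<in>J. \<exists>B. B \<in> sets (N j) \<and> C j = X j -` B \<inter> space M"
      by auto
    then obtain B where B: "\<And>j. j \<in> J \<Longrightarrow> B j \<in> sets (N j)"
      and C_eq: "\<And>j. j \<in> J \<Longrightarrow> C j = X j -` B j \<inter> space M"
      by (metis bchoice)
    have "E.prob (\<Inter>j\<in>J. C j) = E.prob (\<Inter>j\<in>J. X j -` B j \<inter> space M)"
      using C_eq by simp
    also have "\<dots> = (\<Prod>j\<in>J. E.prob (X j -` B j \<inter> space M))"
    proof -
      have "E.prob (X j -` B j \<inter> space M) =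
          prob (X j -` (A j \<inter> B j) \<inter> space M) / prob (X j -` A j \<inter> space M)" if "j \<in> J" for j
        using measure_uniform_measure_indep_vars[of "{j}" B] J B that by auto
      then show ?thesis
        using measure_uniform_measure_indep_vars[of J B] J B by simp
    qed
    finally show "E.prob (\<Inter>j\<in>J. C j) = (\<Prod>j\<in>J. E.prob (C j))"
      using C_eq by simp
  qed
qed

lemma distr_uniform_measure_indep_vars:
  assumes "i \<in> I"
  shows "distr (uniform_measure M E) (N i) (X i) = uniform_measure (distr M (N i) (X i)) (A i)"
proof (rule measure_eqI)
  interpret E: prob_space "uniform_measure M E"
    by (rule prob_space_uniform_measure_preimages)
  have X: "X i \<in> measurable M (N i)"
    using indep assms by (simp add: indep_vars_def)
  have "E \<subseteq> X i -` A i \<inter> space M"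
    using assms by (auto simp: E)
  then have "prob E \<le> prob (X i -` A i \<inter> space M)"
    using X A[OF assms] by (intro finite_measure_mono) auto
  then have pos: "0 < prob (X i -` A i \<inter> space M)"
    using \<open>prob E \<noteq> 0\<close> measure_nonneg[of M E] by linarith
  fix B assume "B \<in> sets (distr (uniform_measure M E) (N i) (X i))"
  then have B: "B \<in> sets (N i)" by simp
  have "emeasure (distr (uniform_measure M E) (N i) (X i)) B = E.prob (X i -` B \<inter> space M)"
    using X B by (simp add: emeasure_distr measurable_uniform_measure E.emeasure_eq_measure)
  also have "E.prob (X i -` B \<inter> space M) =
      prob (X i -` (A i \<inter> B) \<inter> space M) / prob (X i -` A i \<inter> space M)"
    using measure_uniform_measure_indep_vars[of "{i}"] assms B by simp
  also have "ennreal \<dots> = emeasure (uniform_measure (distr M (N i) (X i)) (A i)) B"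
    using X A[OF assms] B pos
    by (simp add: emeasure_distr emeasure_eq_measure divide_ennreal Int_commute)
  finally show "emeasure (distr (uniform_measure M E) (N i) (X i)) B =
      emeasure (uniform_measure (distr M (N i) (X i)) (A i)) B" .
qed simp

end

end

lemma (in prob_space) cond_prob_le_measure_uniform_measure:
  assumes "{\<omega> \<in> space M. Q \<omega>} \<in> events" "B \<in> events" "{\<omega> \<in> space M. P \<omega> \<and> Q \<omega>} \<subseteq> B"
  shows "cond_prob M P Q \<le> measure (uniform_measure M {\<omega> \<in> space M. Q \<omega>}) B"
proof (cases "prob {\<omega> \<in> space M. Q \<omega>} = 0")
  case False
  have "{\<omega> \<in> space M. P \<omega> \<and> Q \<omega>} \<subseteq> {\<omega> \<in> space M. Q \<omega>} \<inter> B"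
    using assms(3) by auto
  then have "cond_prob M P Q \<le> prob ({\<omega> \<in> space M. Q \<omega>} \<inter> B) / prob {\<omega> \<in> space M. Q \<omega>}"
    unfolding cond_prob_def using assms(1,2) by (intro divide_right_mono finite_measure_mono) auto
  also have "\<dots> = measure (uniform_measure M {\<omega> \<in> space M. Q \<omega>}) B"
    using assms(1,2) False by (simp add: emeasure_eq_measure)
  finally show ?thesis .
qed (simp add: cond_prob_def)

lemma (in prob_space) expectation_sign_indicator:
  assumes "C \<in> events"
  shows "expectation (\<lambda>z. 2 * indicator C z - 1) = 2 * prob C - 1"
proof -
  have "integrable M (indicator C :: _ \<Rightarrow> real)"
    using assms by (intro integrable_real_indicator) (auto simp: emeasure_eq_measure)
  moreover have "C \<inter> space M = C"
    using assms sets.sets_into_space by blast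
  ultimately show ?thesis
    by (simp add: prob_space)
qed

lemma pair_measure_uniform_measure:
  assumes "finite_measure M1" "finite_measure M2" and A: "A \<in> sets M1" and B: "B \<in> sets M2"
    and pos: "measure M1 A \<noteq> 0" "measure M2 B \<noteq> 0"
  shows "uniform_measure M1 A \<Otimes>\<^sub>M uniform_measure M2 B = uniform_measure (M1 \<Otimes>\<^sub>M M2) (A \<times> B)"
proof -
  interpret M1: finite_measure M1 by fact
  interpret M2: finite_measure M2 by fact
  have "prob_space (uniform_measure M1 A)" "prob_space (uniform_measure M2 B)"
    using A B pos
    by (auto intro!: prob_space_uniform_measure simp: M1.emeasure_eq_measure M2.emeasure_eq_measure)
  then show ?thesis
  proof (intro pair_measure_eqI prob_space_imp_sigma_finite)
    fix C D assume C: "C \<in> sets (uniform_measure M1 A)" and D: "D \<in> sets (uniform_measure M2 B)"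
    have "(A \<times> B) \<inter> (C \<times> D) = (A \<inter> C) \<times> (B \<inter> D)"
      by auto
    moreover have "A \<inter> C \<in> sets M1" "B \<inter> D \<in> sets M2"
      using A B C D by auto
    ultimately show "emeasure (uniform_measure M1 A) C * emeasure (uniform_measure M2 B) D =
        emeasure (uniform_measure (M1 \<Otimes>\<^sub>M M2) (A \<times> B)) (C \<times> D)"
      using A B C D pos
      by (simp add: M2.emeasure_pair_measure_Times M1.emeasure_eq_measure M2.emeasure_eq_measure
          divide_ennreal ennreal_mult[symmetric] zero_less_measure_iff)
  qed simp_all
qed

section \<open>Concentration of bounded U-statistics\<close>

lemma nn_integral_exp_convex_combination_le:
  fixes w :: "'i \<Rightarrow> real" and Y :: "'i \<Rightarrow> 'a \<Rightarrow> real"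
  assumes "finite C" "C \<noteq> {}" and w: "\<And>c. c \<in> C \<Longrightarrow> 0 \<le> w c" "(\<Sum>c\<in>C. w c) = 1"
    and Y: "\<And>c. c \<in> C \<Longrightarrow> Y c \<in> borel_measurable M"
    and B: "\<And>c. c \<in> C \<Longrightarrow> (\<integral>\<^sup>+x. exp (Y c x) \<partial>M) \<le> ennreal B"
  shows "(\<integral>\<^sup>+x. exp (\<Sum>c\<in>C. w c * Y c x) \<partial>M) \<le> ennreal B"
proof -
  have "exp (\<Sum>c\<in>C. w c * Y c x) \<le> (\<Sum>c\<in>C. w c * exp (Y c x))" for x
    using assms(1,2) exp_convex w by (intro convex_on_sum[where f = exp, simplified]) auto
  then have "(\<integral>\<^sup>+x. exp (\<Sum>c\<in>C. w c * Y c x) \<partial>M) \<le> (\<integral>\<^sup>+x. (\<Sum>c\<in>C. w c * exp (Y c x)) \<partial>M)"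
    by (intro nn_integral_mono) (simp add: ennreal_leI)
  also have "\<dots> = (\<integral>\<^sup>+x. (\<Sum>c\<in>C. ennreal (w c) * ennreal (exp (Y c x))) \<partial>M)"
    using w by (intro nn_integral_cong) (simp add: sum_ennreal[symmetric] ennreal_mult del: sum_ennreal)
  also have "\<dots> = (\<Sum>c\<in>C. ennreal (w c) * (\<integral>\<^sup>+x. exp (Y c x) \<partial>M))"
    using Y by (simp add: nn_integral_sum nn_integral_cmult)
  also have "\<dots> \<le> (\<Sum>c\<in>C. ennreal (w c) * ennreal B)"
    using B by (intro sum_mono mult_left_mono) auto
  also have "\<dots> = ennreal B"
    using w by (simp add: sum_distrib_right[symmetric])
  finally show ?thesis .
qed

definition u_statistic :: "nat \<Rightarrow> ('b \<times> 'b \<Rightarrow> real) \<Rightarrow> (nat \<Rightarrow> 'b) \<Rightarrow> real" where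
  "u_statistic m h x = (\<Sum>q\<in>index_pairs m. h (x (fst q), x (snd q))) / card (index_pairs m)"

locale bounded_u_statistic = prob_space +
  fixes N \<nu> :: "'b measure" and X :: "nat \<Rightarrow> 'a \<Rightarrow> 'b" and m :: nat and h :: "'b \<times> 'b \<Rightarrow> real"
  assumes indep: "indep_vars (\<lambda>_. N) X {..<m}"
    and distr_X: "\<And>a. a < m \<Longrightarrow> distr M N (X a) = \<nu>"
    and measurable_kernel [measurable]: "h \<in> borel_measurable (N \<Otimes>\<^sub>M N)"
    and abs_kernel_le: "\<And>z. \<bar>h z\<bar> \<le> 1"
    and two_le_m: "2 \<le> m"
begin

definition U :: "'a \<Rightarrow> real" where
  "U \<omega> = u_statistic m h (\<lambda>a. X a \<omega>)"

definition \<theta> :: real where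
  "\<theta> = (\<integral>z. h z \<partial>(\<nu> \<Otimes>\<^sub>M \<nu>))"

definition kernel_deviation :: "nat \<times> nat \<Rightarrow> 'a \<Rightarrow> real" where
  "kernel_deviation q \<omega> = h (X (fst q) \<omega>, X (snd q) \<omega>) - \<theta>"

lemma card_index_pairs_pos: "0 < card (index_pairs m)"
  using card_index_pairs[of m] two_le_m by (cases "card (index_pairs m)") auto

lemma measurable_pair:
  assumes "q \<in> index_pairs m"
  shows "(\<lambda>\<omega>. (X (fst q) \<omega>, X (snd q) \<omega>)) \<in> measurable M (N \<Otimes>\<^sub>M N)"
  using assms indep by (auto simp: index_pairs_def indep_vars_def intro!: measurable_Pair)

lemma measurable_kernel_pair:
  assumes "q \<in> index_pairs m"
  shows "(\<lambda>\<omega>. h (X (fst q) \<omega>, X (snd q) \<omega>)) \<in> borel_measurable M"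
  using measurable_pair[OF assms] by measurable

lemma distr_pair:
  assumes "q \<in> index_pairs m"
  shows "distr M (N \<Otimes>\<^sub>M N) (\<lambda>\<omega>. (X (fst q) \<omega>, X (snd q) \<omega>)) = \<nu> \<Otimes>\<^sub>M \<nu>"
  using assms distr_pair_indep_vars[OF indep, of "fst q" "snd q"] distr_X
  by (auto simp: index_pairs_def)

lemma expectation_kernel_pair:
  assumes "q \<in> index_pairs m"
  shows "expectation (\<lambda>\<omega>. h (X (fst q) \<omega>, X (snd q) \<omega>)) = \<theta>"
proof -
  have "\<theta> = (\<integral>z. h z \<partial>distr M (N \<Otimes>\<^sub>M N) (\<lambda>\<omega>. (X (fst q) \<omega>, X (snd q) \<omega>)))"
    by (simp add: \<theta>_def distr_pair[OF assms])
  also have "\<dots> = expectation (\<lambda>\<omega>. h (X (fst q) \<omega>, X (snd q) \<omega>))"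
    by (rule integral_distr[OF measurable_pair[OF assms] measurable_kernel])
  finally show ?thesis ..
qed

lemma nn_integral_exp_kernel_deviation_le:
  assumes "q \<in> index_pairs m" "0 < l"
  shows "(\<integral>\<^sup>+\<omega>. exp (l * kernel_deviation q \<omega>) \<partial>M) \<le> ennreal (exp (l\<^sup>2 / 2))"
proof -
  interpret interval_bounded_random_variable M "\<lambda>\<omega>. h (X (fst q) \<omega>, X (snd q) \<omega>)" "-1" 1
    using measurable_kernel_pair[OF assms(1)] abs_kernel_le by unfold_locales (auto simp: abs_le_iff)
  show ?thesis
    using Hoeffdings_lemma_nn_integral[OF assms(2)]
    by (simp add: kernel_deviation_def expectation_kernel_pair[OF assms(1)])
qed

lemma measurable_kernel_deviation:
  "q \<in> index_pairs m \<Longrightarrow> kernel_deviation q \<in> borel_measurable M"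
  using measurable_kernel_pair unfolding kernel_deviation_def[abs_def] by measurable

definition active_classes :: "nat set" where
  "active_classes = {c \<in> {..<m}. round_robin_class m c \<noteq> {}}"

definition class_weight :: "nat \<Rightarrow> real" where
  "class_weight c = card (round_robin_class m c) / card (index_pairs m)"

definition class_mean :: "nat \<Rightarrow> 'a \<Rightarrow> real" where
  "class_mean c \<omega> = (\<Sum>q\<in>round_robin_class m c. kernel_deviation q \<omega>) / card (round_robin_class m c)"

lemma sum_active_classes_eq:
  "(\<Sum>c\<in>active_classes. f c) = (\<Sum>c<m. f c)" if "\<And>c. round_robin_class m c = {} \<Longrightarrow> f c = 0"
  using that by (intro sum.mono_neutral_left) (auto simp: active_classes_def)

lemma sum_class_weight: "(\<Sum>c\<in>active_classes. class_weight c) = 1"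
proof -
  have "real (card (index_pairs m)) = (\<Sum>c<m. real (card (round_robin_class m c)))"
    using sum_index_pairs_by_class[of m "\<lambda>_. 1::real"] two_le_m by simp
  then show ?thesis
    using card_index_pairs_pos
    by (simp add: sum_active_classes_eq class_weight_def sum_divide_distrib[symmetric])
qed

lemma U_minus_\<theta>_eq: "U \<omega> - \<theta> = (\<Sum>c\<in>active_classes. class_weight c * class_mean c \<omega>)"
proof -
  have "(\<Sum>q\<in>index_pairs m. kernel_deviation q \<omega>)
      = (\<Sum>q\<in>index_pairs m. h (X (fst q) \<omega>, X (snd q) \<omega>)) - card (index_pairs m) * \<theta>"
    by (simp add: kernel_deviation_def sum_subtractf)
  then have "U \<omega> - \<theta> = (\<Sum>q\<in>index_pairs m. kernel_deviation q \<omega>) / card (index_pairs m)"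
    using card_index_pairs_pos by (auto simp: U_def u_statistic_def diff_divide_distrib)
  also have "\<dots> = (\<Sum>c<m. \<Sum>q\<in>round_robin_class m c. kernel_deviation q \<omega>) / card (index_pairs m)"
    using two_le_m by (simp add: sum_index_pairs_by_class)
  also have "\<dots> = (\<Sum>c<m. class_weight c * class_mean c \<omega>)"
  proof -
    have "class_weight c * class_mean c \<omega>
        = (\<Sum>q\<in>round_robin_class m c. kernel_deviation q \<omega>) / card (index_pairs m)" for c
      using finite_round_robin_class[of m c]
      by (cases "round_robin_class m c = {}") (simp_all add: class_weight_def class_mean_def)
    then show ?thesis
      by (simp add: sum_divide_distrib)
  qed
  finally show ?thesis
    by (simp add: sum_active_classes_eq class_weight_def)
qed

lemma nn_integral_exp_class_mean_le:
  assumes "c \<in> active_classes" "0 < l"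
  shows "(\<integral>\<^sup>+\<omega>. exp (l * class_mean c \<omega>) \<partial>M) \<le> ennreal (exp (2 * l\<^sup>2 / m))"
proof -
  let ?Q = "round_robin_class m c"
  define n\<^sub>c where "n\<^sub>c = real (card ?Q)"
  have "?Q \<noteq> {}"
    using assms(1) by (simp add: active_classes_def)
  then have "0 < n\<^sub>c"
    using finite_round_robin_class by (simp add: n\<^sub>c_def card_gt_0_iff)
  have Q_pairs: "?Q \<subseteq> {..<m} \<times> {..<m}"
    using round_robin_class_subset[of m c] by (auto simp: index_pairs_def)
  have indep_Q: "indep_vars (\<lambda>_. borel) (\<lambda>q \<omega>. ennreal (exp (l / n\<^sub>c * kernel_deviation q \<omega>))) ?Q"
    using indep_vars_disjoint_pairs[OF indep Q_pairs round_robin_class_disjoint,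
        of "\<lambda>q z. ennreal (exp (l / n\<^sub>c * (h z - \<theta>)))"]
    by (simp add: kernel_deviation_def)
  have "l * class_mean c \<omega> = (\<Sum>q\<in>?Q. l / n\<^sub>c * kernel_deviation q \<omega>)" for \<omega>
    by (simp add: class_mean_def n\<^sub>c_def sum_distrib_left sum_divide_distrib)
  then have "(\<integral>\<^sup>+\<omega>. exp (l * class_mean c \<omega>) \<partial>M)
      = (\<integral>\<^sup>+\<omega>. (\<Prod>q\<in>?Q. ennreal (exp (l / n\<^sub>c * kernel_deviation q \<omega>))) \<partial>M)"
    using finite_round_robin_class by (simp add: exp_sum prod_ennreal)
  also have "\<dots> = (\<Prod>q\<in>?Q. \<integral>\<^sup>+\<omega>. exp (l / n\<^sub>c * kernel_deviation q \<omega>) \<partial>M)"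
    using finite_round_robin_class indep_Q by (rule indep_vars_nn_integral) simp
  also have "\<dots> \<le> (\<Prod>q\<in>?Q. ennreal (exp ((l / n\<^sub>c)\<^sup>2 / 2)))"
    using round_robin_class_subset \<open>0 < l\<close> \<open>0 < n\<^sub>c\<close>
    by (intro prod_mono_ennreal nn_integral_exp_kernel_deviation_le) auto
  also have "\<dots> = ennreal (exp (l\<^sup>2 / (2 * n\<^sub>c)))"
    using \<open>0 < n\<^sub>c\<close>
    by (simp add: ennreal_power exp_of_nat_mult[symmetric] n\<^sub>c_def power2_eq_square)
  also have "\<dots> \<le> ennreal (exp (2 * l\<^sup>2 / m))"
  proof -
    have "real m \<le> 4 * n\<^sub>c"
      using card_round_robin_class_ge[OF \<open>?Q \<noteq> {}\<close>] by (simp add: n\<^sub>c_def)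
    then have "real m * l\<^sup>2 \<le> 4 * n\<^sub>c * l\<^sup>2"
      by (intro mult_right_mono) auto
    then have "l\<^sup>2 / (2 * n\<^sub>c) \<le> 2 * l\<^sup>2 / m"
      using \<open>0 < n\<^sub>c\<close> two_le_m by (simp add: field_simps)
    then show ?thesis
      by simp
  qed
  finally show ?thesis .
qed

lemma nn_integral_exp_U_le:
  assumes "0 < l"
  shows "(\<integral>\<^sup>+\<omega>. exp (l * (U \<omega> - \<theta>)) \<partial>M) \<le> ennreal (exp (2 * l\<^sup>2 / m))"
proof -
  have "active_classes \<noteq> {}"
    using sum_class_weight by auto
  moreover have "class_mean c \<in> borel_measurable M" for c
  proof -
    have "(\<lambda>\<omega>. \<Sum>q\<in>round_robin_class m c. kernel_deviation q \<omega>) \<in> borel_measurable M"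
      using measurable_kernel_deviation round_robin_class_subset by (intro borel_measurable_sum) blast
    then show ?thesis
      unfolding class_mean_def[abs_def] by measurable
  qed
  ultimately have "(\<integral>\<^sup>+\<omega>. exp (\<Sum>c\<in>active_classes. class_weight c * (l * class_mean c \<omega>)) \<partial>M)
      \<le> ennreal (exp (2 * l\<^sup>2 / m))"
    using sum_class_weight nn_integral_exp_class_mean_le[OF _ assms]
    by (intro nn_integral_exp_convex_combination_le) (auto simp: active_classes_def class_weight_def)
  then show ?thesis
    by (simp add: U_minus_\<theta>_eq sum_distrib_left mult.left_commute)
qed

lemma measurable_U [measurable]: "U \<in> borel_measurable M"
proof -
  have "(\<lambda>\<omega>. \<Sum>q\<in>index_pairs m. h (X (fst q) \<omega>, X (snd q) \<omega>)) \<in> borel_measurable M"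
    using measurable_kernel_pair by (rule borel_measurable_sum)
  then show ?thesis
    unfolding U_def[abs_def] u_statistic_def by measurable
qed

lemma expectation_U: "expectation U = \<theta>"
proof -
  have integrable: "integrable M (\<lambda>\<omega>. h (X (fst q) \<omega>, X (snd q) \<omega>))" if "q \<in> index_pairs m" for q
    using measurable_kernel_pair[OF that] abs_kernel_le
    by (intro integrable_const_bound[where B = 1]) auto
  have "expectation U
      = (\<Sum>q\<in>index_pairs m. expectation (\<lambda>\<omega>. h (X (fst q) \<omega>, X (snd q) \<omega>))) / card (index_pairs m)"
    using integrable by (simp add: U_def[abs_def] u_statistic_def)
  also have "\<dots> = \<theta>"
    using card_index_pairs_pos by (auto simp: expectation_kernel_pair)
  finally show ?thesis .
qed

lemma prob_U_ge:
  assumes "0 < t"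
  shows "prob {\<omega> \<in> space M. \<theta> + t \<le> U \<omega>} \<le> exp (- real m * t\<^sup>2 / 8)"
proof -
  define l where "l = real m * t / 4"
  have "0 < l"
    using assms two_le_m by (simp add: l_def)
  have "emeasure M {\<omega> \<in> space M. t \<le> U \<omega> - \<theta>}
      \<le> ennreal (exp (- l * t)) * (\<integral>\<^sup>+\<omega>. ennreal (exp (l * (U \<omega> - \<theta>))) * indicator (space M) \<omega> \<partial>M)"
    using \<open>0 < l\<close> by (intro Chernoff_ineq_nn_integral_ge) auto
  also have "(\<integral>\<^sup>+\<omega>. ennreal (exp (l * (U \<omega> - \<theta>))) * indicator (space M) \<omega> \<partial>M)
      = (\<integral>\<^sup>+\<omega>. exp (l * (U \<omega> - \<theta>)) \<partial>M)"
    by (intro nn_integral_cong) simp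
  also have "ennreal (exp (- l * t)) * \<dots> \<le> ennreal (exp (- l * t)) * ennreal (exp (2 * l\<^sup>2 / m))"
    using nn_integral_exp_U_le[OF \<open>0 < l\<close>] by (rule mult_left_mono) simp
  also have "\<dots> = ennreal (exp (- real m * t\<^sup>2 / 8))"
    using two_le_m
    by (simp add: ennreal_mult[symmetric] exp_add[symmetric] l_def power2_eq_square field_simps)
  finally have "emeasure M {\<omega> \<in> space M. t \<le> U \<omega> - \<theta>} \<le> ennreal (exp (- real m * t\<^sup>2 / 8))" .
  moreover have "{\<omega> \<in> space M. t \<le> U \<omega> - \<theta>} = {\<omega> \<in> space M. \<theta> + t \<le> U \<omega>}"
    by auto
  ultimately show ?thesis
    by (simp add: emeasure_eq_measure)
qed

lemma prob_abs_U_ge: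
  assumes "0 < t"
  shows "prob {\<omega> \<in> space M. t \<le> \<bar>U \<omega> - \<theta>\<bar>} \<le> 2 * exp (- real m * t\<^sup>2 / 8)"
proof -
  interpret flip: bounded_u_statistic M N \<nu> X m "\<lambda>z. - h z"
    using indep distr_X abs_kernel_le two_le_m by unfold_locales auto
  have flip_U: "flip.U \<omega> = - U \<omega>" for \<omega>
    by (simp add: flip.U_def U_def u_statistic_def sum_negf)
  have flip_\<theta>: "flip.\<theta> = - \<theta>"
    by (simp add: flip.\<theta>_def \<theta>_def)
  have "{\<omega> \<in> space M. t \<le> \<bar>U \<omega> - \<theta>\<bar>}
      = {\<omega> \<in> space M. \<theta> + t \<le> U \<omega>} \<union> {\<omega> \<in> space M. flip.\<theta> + t \<le> flip.U \<omega>}"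
    by (auto simp: flip_U flip_\<theta>)
  also have "prob \<dots> \<le> prob {\<omega> \<in> space M. \<theta> + t \<le> U \<omega>} + prob {\<omega> \<in> space M. flip.\<theta> + t \<le> flip.U \<omega>}"
    by (intro measure_Un_le) auto
  also have "\<dots> \<le> 2 * exp (- real m * t\<^sup>2 / 8)"
    using prob_U_ge[OF assms] flip.prob_U_ge[OF assms] by simp
  finally show ?thesis .
qed

end

section \<open>Kendall's tau given the labels\<close>

definition kendall_kernel :: "(real \<times> real \<times> 'c) \<times> (real \<times> real \<times> 'c) \<Rightarrow> real" where
  "kendall_kernel = (\<lambda>((x, y, _), (x', y', _)). if 0 < (x - x') * (y - y') then 1 else - 1)"

lemma kendall_kernel_eq:
  "kendall_kernel z =
    (if 0 < (fst (fst z) - fst (snd z)) * (fst (snd (fst z)) - fst (snd (snd z))) then 1 else - 1)"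
  by (simp add: kendall_kernel_def split: prod.splits)

lemma space_obs_space [simp]: "space obs_space = UNIV"
  by (simp add: obs_space_def space_pair_measure)

lemma label_set_in_sets: "{u. snd (snd u) = c} \<in> sets obs_space"
proof -
  have "{u \<in> space obs_space. snd (snd u) = c} \<in> sets obs_space"
    unfolding obs_space_def by measurable
  then show ?thesis
    by simp
qed

lemma measurable_kendall_kernel [measurable]:
  "kendall_kernel \<in> borel_measurable (obs_space \<Otimes>\<^sub>M obs_space)"
  unfolding kendall_kernel_eq[abs_def] obs_space_def by measurable

lemma abs_kendall_kernel_le: "\<bar>kendall_kernel z\<bar> \<le> 1"
  by (simp add: kendall_kernel_def split: prod.splits)

lemma cond_tau_eq_integral_kendall_kernel:
  fixes \<mu> :: "(real \<times> real \<times> nat) measure" and k :: nat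
  defines "K \<equiv> {u. snd (snd u) = k}"
  assumes "prob_space \<mu>" "sets \<mu> = sets obs_space" "measure \<mu> K \<noteq> 0"
  shows "cond_tau \<mu> k = (\<integral>z. kendall_kernel z \<partial>(uniform_measure \<mu> K \<Otimes>\<^sub>M uniform_measure \<mu> K))"
proof -
  interpret \<mu>: prob_space \<mu> by fact
  define C where "C = {z :: (real \<times> real \<times> nat) \<times> (real \<times> real \<times> nat).
    0 < (fst (fst z) - fst (snd z)) * (fst (snd (fst z)) - fst (snd (snd z)))}"
  have sets_pair: "sets (\<mu> \<Otimes>\<^sub>M \<mu>) = sets (obs_space \<Otimes>\<^sub>M obs_space)"
    using assms(3) by (simp cong: sets_pair_measure_cong)
  have "K \<in> sets \<mu>"
    using label_set_in_sets by (simp add: assms(3) K_def)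
  have "{z \<in> space (obs_space \<Otimes>\<^sub>M obs_space).
      0 < (fst (fst z) - fst (snd z)) * (fst (snd (fst z)) - fst (snd (snd z)))}
      \<in> sets (obs_space \<Otimes>\<^sub>M obs_space)"
    unfolding obs_space_def by measurable
  then have "C \<in> sets (\<mu> \<Otimes>\<^sub>M \<mu>)"
    by (simp add: sets_pair C_def space_pair_measure)
  have "K \<times> K \<in> sets (\<mu> \<Otimes>\<^sub>M \<mu>)"
    using \<open>K \<in> sets \<mu>\<close> by auto
  have pair_uniform: "uniform_measure \<mu> K \<Otimes>\<^sub>M uniform_measure \<mu> K = uniform_measure (\<mu> \<Otimes>\<^sub>M \<mu>) (K \<times> K)"
    using \<open>K \<in> sets \<mu>\<close> assms(4) by (intro pair_measure_uniform_measure) unfold_locales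
  interpret \<mu>\<mu>: pair_prob_space \<mu> \<mu> ..
  have "measure (\<mu> \<Otimes>\<^sub>M \<mu>) (K \<times> K) \<noteq> 0"
    using \<open>K \<in> sets \<mu>\<close> assms(4)
    by (simp add: measure_def \<mu>.emeasure_pair_measure_Times enn2real_mult)
  then interpret KK: prob_space "uniform_measure (\<mu> \<Otimes>\<^sub>M \<mu>) (K \<times> K)"
    using \<open>K \<times> K \<in> sets (\<mu> \<Otimes>\<^sub>M \<mu>)\<close>
    by (intro prob_space_uniform_measure) (auto simp: \<mu>\<mu>.emeasure_eq_measure)
  have "(\<integral>z. kendall_kernel z \<partial>uniform_measure (\<mu> \<Otimes>\<^sub>M \<mu>) (K \<times> K))
      = (\<integral>z. 2 * indicator C z - 1 \<partial>uniform_measure (\<mu> \<Otimes>\<^sub>M \<mu>) (K \<times> K))"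
    by (intro Bochner_Integration.integral_cong)
      (auto simp: kendall_kernel_def C_def split: prod.splits)
  also have "\<dots> = 2 * measure (uniform_measure (\<mu> \<Otimes>\<^sub>M \<mu>) (K \<times> K)) C - 1"
    using \<open>C \<in> sets (\<mu> \<Otimes>\<^sub>M \<mu>)\<close> by (simp add: KK.expectation_sign_indicator)
  also have "\<dots> = 2 * (measure (\<mu> \<Otimes>\<^sub>M \<mu>) (K \<times> K \<inter> C) / measure (\<mu> \<Otimes>\<^sub>M \<mu>) (K \<times> K)) - 1"
    using \<open>C \<in> sets (\<mu> \<Otimes>\<^sub>M \<mu>)\<close> \<open>measure (\<mu> \<Otimes>\<^sub>M \<mu>) (K \<times> K) \<noteq> 0\<close>
    by (simp add: \<mu>\<mu>.emeasure_eq_measure)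
  also have "\<dots> = cond_tau \<mu> k"
  proof -
    have "{(u, v). (fst u - fst v) * (fst (snd u) - fst (snd v)) > 0
        \<and> snd (snd u) = k \<and> snd (snd v) = k}
        = K \<times> K \<inter> C"
      by (auto simp: K_def C_def)
    moreover have "{(u, v). snd (snd u) = k \<and> snd (snd v) = k} = K \<times> K"
      by (auto simp: K_def)
    ultimately show ?thesis
      by (simp add: cond_tau_def)
  qed
  finally show ?thesis
    by (simp add: pair_uniform)
qed

lemma real_card_filter: "finite A \<Longrightarrow> real (card {i \<in> A. P i}) = (\<Sum>i\<in>A. if P i then 1 else 0)"
  by (simp add: sum.If_cases Int_def)

lemma borel_measurable_n_k:
  assumes "\<And>i. i \<in> {1..n} \<Longrightarrow> YS i \<in> M \<rightarrow>\<^sub>M count_space UNIV"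
  shows "(\<lambda>\<omega>. real (n_k n YS k \<omega>)) \<in> borel_measurable M"
proof -
  have "(\<lambda>\<omega>. \<Sum>i\<in>{1..n}. if YS i \<omega> = k then 1 else 0 :: real) \<in> borel_measurable M"
  proof (rule borel_measurable_sum)
    fix i assume "i \<in> {1..n}"
    note [measurable] = assms[OF this]
    show "(\<lambda>\<omega>. if YS i \<omega> = k then 1 else 0 :: real) \<in> borel_measurable M"
      by measurable
  qed
  moreover have "real (n_k n YS k \<omega>) = (\<Sum>i\<in>{1..n}. if YS i \<omega> = k then 1 else 0)" for \<omega>
    unfolding n_k_def by (rule real_card_filter) simp
  ultimately show ?thesis
    by simp
qed

lemma borel_measurable_pi_hat:
  assumes "\<And>i. i \<in> {1..n} \<Longrightarrow> YS i \<in> M \<rightarrow>\<^sub>M count_space UNIV"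
  shows "pi_hat n YS k \<in> borel_measurable M"
proof -
  note [measurable] = borel_measurable_n_k[OF assms]
  show ?thesis
    unfolding pi_hat_def[abs_def] by measurable
qed

lemma borel_measurable_tau_hat:
  assumes "\<And>i. i \<in> {1..n} \<Longrightarrow> XSj i \<in> borel_measurable M"
    and "\<And>i. i \<in> {1..n} \<Longrightarrow> XSl i \<in> borel_measurable M"
    and "\<And>i. i \<in> {1..n} \<Longrightarrow> YS i \<in> M \<rightarrow>\<^sub>M count_space UNIV"
  shows "tau_hat n XSj XSl YS k \<in> borel_measurable M"
proof -
  have [measurable]: "(\<lambda>\<omega>. \<Sum>i\<in>{1..n}. \<Sum>t\<in>{i<..n}.
      if (XSj i \<omega> - XSj t \<omega>) * (XSl i \<omega> - XSl t \<omega>) > 0 \<and> YS i \<omega> = k \<and> YS t \<omega> = k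
      then 1 else 0 :: real) \<in> borel_measurable M"
  proof (intro borel_measurable_sum)
    fix i t assume "i \<in> {1..n}" "t \<in> {i<..n}"
    then have "i \<in> {1..n}" "t \<in> {1..n}" by auto
    note [measurable] = assms[OF this(1)] assms[OF this(2)]
    show "(\<lambda>\<omega>. if (XSj i \<omega> - XSj t \<omega>) * (XSl i \<omega> - XSl t \<omega>) > 0 \<and> YS i \<omega> = k \<and> YS t \<omega> = k
        then 1 else 0 :: real) \<in> borel_measurable M"
      by measurable
  qed
  note [measurable] = borel_measurable_n_k[OF assms(3)]
  show ?thesis
    unfolding tau_hat_def[abs_def] by measurable
qed

locale kendall_given_labels = prob_space +
  fixes n k :: nat and XSj XSl :: "nat \<Rightarrow> 'a \<Rightarrow> real" and YS :: "nat \<Rightarrow> 'a \<Rightarrow> nat"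
    and \<mu> :: "(real \<times> real \<times> nat) measure" and y :: "nat \<Rightarrow> nat"
  assumes distr_sample: "\<And>i. i \<in> {1..n} \<Longrightarrow> distr M obs_space (trip (XSj i) (XSl i) (YS i)) = \<mu>"
    and indep_sample: "indep_vars (\<lambda>_. obs_space) (\<lambda>i. trip (XSj i) (XSl i) (YS i)) {1..n}"
    and prob_labels_pos: "0 < prob {\<omega> \<in> space M. \<forall>i\<in>{1..n}. YS i \<omega> = y i}"
    and two_le_card_class: "2 \<le> card {i \<in> {1..n}. y i = k}"
begin

abbreviation T :: "nat \<Rightarrow> 'a \<Rightarrow> real \<times> real \<times> nat" where
  "T i \<equiv> trip (XSj i) (XSl i) (YS i)"

definition E :: "'a set" where
  "E = {\<omega> \<in> space M. \<forall>i\<in>{1..n}. YS i \<omega> = y i}"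

definition S :: "nat set" where
  "S = {i \<in> {1..n}. y i = k}"

abbreviation K :: "(real \<times> real \<times> nat) set" where
  "K \<equiv> {u. snd (snd u) = k}"

lemma S_subset: "S \<subseteq> {1..n}"
  by (auto simp: S_def)

lemma finite_S: "finite S"
  by (simp add: S_def)

lemma enumerate_S_in: "a < card S \<Longrightarrow> enumerate S a \<in> S"
  using finite_S by (rule finite_enumerate_in_set)

lemma E_eq_labels: "E = {\<omega> \<in> space M. \<forall>i\<in>{1..n}. T i \<omega> \<in> {u. snd (snd u) = y i}}"
  by (simp add: E_def trip_def)

lemma prob_E_neq_0: "prob E \<noteq> 0"
  using prob_labels_pos by (simp add: E_def)

lemma indep_given_labels: "prob_space.indep_vars (uniform_measure M E) (\<lambda>_. obs_space) T {1..n}"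
  by (rule indep_vars_uniform_measure[OF indep_sample _ label_set_in_sets E_eq_labels prob_E_neq_0])
    simp

lemma distr_given_labels:
  assumes "i \<in> S"
  shows "distr (uniform_measure M E) obs_space (T i) = uniform_measure \<mu> K"
proof -
  have "i \<in> {1..n}" "y i = k"
    using assms by (auto simp: S_def)
  then show ?thesis
    using distr_uniform_measure_indep_vars[OF indep_sample _ _ E_eq_labels prob_E_neq_0]
      label_set_in_sets distr_sample
    by auto
qed

lemma prob_space_given_labels: "prob_space (uniform_measure M E)"
  by (rule prob_space_uniform_measure_preimages[OF indep_sample _ label_set_in_sets E_eq_labels
        prob_E_neq_0]) simp

sublocale given_labels: bounded_u_statistic "uniform_measure M E" obs_space "uniform_measure \<mu> K"
  "\<lambda>a. T (enumerate S a)" "card S" kendall_kernel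
proof (intro bounded_u_statistic.intro bounded_u_statistic_axioms.intro prob_space_given_labels)
  have "inj_on (enumerate S) {..<card S}" "enumerate S ` {..<card S} \<subseteq> {1..n}"
    using finite_bij_enumerate[OF finite_S] S_subset by (auto simp: bij_betw_def)
  then show "prob_space.indep_vars (uniform_measure M E) (\<lambda>_. obs_space)
      (\<lambda>a. T (enumerate S a)) {..<card S}"
    using prob_space.indep_vars_reindex[OF prob_space_given_labels indep_given_labels] by simp
  show "distr (uniform_measure M E) obs_space (T (enumerate S a)) = uniform_measure \<mu> K"
    if "a < card S" for a
    using that enumerate_S_in distr_given_labels by blast
  show "2 \<le> card S"
    using two_le_card_class by (simp add: S_def)
qed (auto simp: abs_kendall_kernel_le)

lemma E_in_sets: "E \<in> events"
  using prob_E_neq_0 measure_notin_sets by blast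

lemma measurable_T: "i \<in> {1..n} \<Longrightarrow> T i \<in> M \<rightarrow>\<^sub>M obs_space"
  using indep_sample by (simp add: indep_vars_def)

lemma card_S_le: "card S \<le> n"
  using card_mono[OF _ S_subset] by simp

lemma S_nonempty: "S \<noteq> {}"
  using given_labels.two_le_m by (cases "S = {}") auto

lemma measure_class_neq_0: "measure \<mu> K \<noteq> 0"
proof -
  obtain i where "i \<in> S"
    using S_nonempty by blast
  then have i: "i \<in> {1..n}" "y i = k"
    by (auto simp: S_def)
  have "E \<subseteq> T i -` K \<inter> space M"
    using i by (auto simp: E_def trip_def)
  then have "prob E \<le> prob (T i -` K \<inter> space M)"
    using measurable_sets[OF measurable_T[OF i(1)] label_set_in_sets] by (rule finite_measure_mono)
  also have "\<dots> = measure (distr M obs_space (T i)) K"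
    by (rule measure_distr[OF measurable_T[OF i(1)] label_set_in_sets, symmetric])
  also have "\<dots> = measure \<mu> K"
    by (simp add: distr_sample[OF i(1)])
  finally show ?thesis
    using prob_E_neq_0 measure_nonneg[of M E] by linarith
qed

lemma cond_tau_eq_\<theta>: "cond_tau \<mu> k = given_labels.\<theta>"
proof -
  obtain i where "i \<in> S"
    using S_nonempty by blast
  then have "i \<in> {1..n}"
    using S_subset by blast
  then have "prob_space \<mu>" "sets \<mu> = sets obs_space"
    using prob_space_distr[OF measurable_T] distr_sample by (metis, metis sets_distr)
  then show ?thesis
    using measure_class_neq_0
    by (simp add: cond_tau_eq_integral_kendall_kernel given_labels.\<theta>_def)
qed

lemma n_k_on_E: "\<omega> \<in> E \<Longrightarrow> n_k n YS k \<omega> = card S"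
  unfolding n_k_def S_def E_def by (auto intro!: arg_cong[where f = card])

lemma pi_hat_on_E: "\<omega> \<in> E \<Longrightarrow> pi_hat n YS k \<omega> = card S / n"
  by (simp add: pi_hat_def n_k_on_E)

definition class_pairs :: "(nat \<times> nat) set" where
  "class_pairs = {p \<in> S \<times> S. fst p < snd p}"

lemma two_card_class_pairs: "2 * real (card class_pairs) = real (card S) * (real (card S) - 1)"
proof -
  have "card class_pairs = card (index_pairs (card S))"
    using sum_index_pairs_enumerate[OF finite_S, of "\<lambda>_. 1 :: nat"] by (simp add: class_pairs_def)
  moreover have "real (2 * card (index_pairs (card S))) = real (card S * (card S - 1))"
    by (simp only: card_index_pairs)
  ultimately show ?thesis
    using given_labels.two_le_m by (simp add: of_nat_diff)
qed

lemma U_eq_class_pairs: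
  "given_labels.U \<omega> = (\<Sum>p\<in>class_pairs. kendall_kernel (T (fst p) \<omega>, T (snd p) \<omega>)) / card class_pairs"
  using sum_index_pairs_enumerate[OF finite_S, of "\<lambda>p. kendall_kernel (T (fst p) \<omega>, T (snd p) \<omega>)"]
    sum_index_pairs_enumerate[OF finite_S, of "\<lambda>_. 1 :: nat"]
  by (simp add: given_labels.U_def u_statistic_def class_pairs_def)

lemma concordant_pairs_on_E:
  assumes "\<omega> \<in> E"
  shows "(\<Sum>i\<in>{1..n}. \<Sum>t\<in>{i<..n}.
      if (XSj i \<omega> - XSj t \<omega>) * (XSl i \<omega> - XSl t \<omega>) > 0 \<and> YS i \<omega> = k \<and> YS t \<omega> = k
      then 1 else 0 :: real)
    = (\<Sum>p\<in>class_pairs.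
      if 0 < (XSj (fst p) \<omega> - XSj (snd p) \<omega>) * (XSl (fst p) \<omega> - XSl (snd p) \<omega>) then 1 else 0)"
  (is "(\<Sum>i\<in>{1..n}. \<Sum>t\<in>{i<..n}. ?F i t) = _")
proof -
  have labels: "YS i \<omega> = y i" if "i \<in> {1..n}" for i
    using assms that by (simp add: E_def)
  have "(\<Sum>i\<in>{1..n}. \<Sum>t\<in>{i<..n}. ?F i t) = (\<Sum>p\<in>Sigma {1..n} (\<lambda>i. {i<..n}). ?F (fst p) (snd p))"
    by (simp add: sum.Sigma split_def)
  also have "\<dots> = (\<Sum>p\<in>class_pairs.
      if 0 < (XSj (fst p) \<omega> - XSj (snd p) \<omega>) * (XSl (fst p) \<omega> - XSl (snd p) \<omega>) then 1 else 0)"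
  proof (rule sum.mono_neutral_cong_right)
    show "class_pairs \<subseteq> Sigma {1..n} (\<lambda>i. {i<..n})"
      by (auto simp: class_pairs_def S_def)
  qed (auto simp: class_pairs_def S_def labels)
  finally show ?thesis .
qed

lemma tau_hat_on_E:
  assumes "\<omega> \<in> E"
  shows "tau_hat n XSj XSl YS k \<omega> = given_labels.U \<omega>"
proof -
  define conc where "conc p \<longleftrightarrow> 0 < (XSj (fst p) \<omega> - XSj (snd p) \<omega>) * (XSl (fst p) \<omega> - XSl (snd p) \<omega>)"
    for p
  define cnt where "cnt = (\<Sum>p\<in>class_pairs. if conc p then 1 else 0 :: real)"
  define c where "c = real (card class_pairs)"
  have "0 < real (card S) * (real (card S) - 1)"
    using given_labels.two_le_m by (intro mult_pos_pos) auto
  then have "0 < c"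
    using two_card_class_pairs by (simp add: c_def)
  have "tau_hat n XSj XSl YS k \<omega> = 4 / (real (card S) * (real (card S) - 1)) * cnt - 1"
    unfolding tau_hat_def n_k_on_E[OF assms] concordant_pairs_on_E[OF assms] cnt_def conc_def ..
  then have "tau_hat n XSj XSl YS k \<omega> = 4 / (2 * c) * cnt - 1"
    by (simp add: two_card_class_pairs c_def)
  moreover have "(\<Sum>p\<in>class_pairs. kendall_kernel (T (fst p) \<omega>, T (snd p) \<omega>))
      = (\<Sum>p\<in>class_pairs. 2 * (if conc p then 1 else 0) - 1)"
    by (intro sum.cong refl) (simp add: kendall_kernel_def trip_def conc_def)
  then have "given_labels.U \<omega> = (2 * cnt - c) / c"
    by (simp add: U_eq_class_pairs sum_subtractf sum_distrib_left cnt_def c_def)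
  moreover have "4 / (2 * c) * cnt - 1 = (2 * cnt - c) / c"
    using \<open>0 < c\<close> by (simp add: field_simps)
  ultimately show ?thesis
    by simp
qed

lemma measurable_sample_components:
  assumes "i \<in> {1..n}"
  shows "XSj i \<in> borel_measurable M" "XSl i \<in> borel_measurable M" "YS i \<in> M \<rightarrow>\<^sub>M count_space UNIV"
proof -
  note [measurable] = measurable_T[OF assms, unfolded obs_space_def]
  have "(\<lambda>\<omega>. fst (T i \<omega>)) \<in> borel_measurable M" "(\<lambda>\<omega>. fst (snd (T i \<omega>))) \<in> borel_measurable M"
    "(\<lambda>\<omega>. snd (snd (T i \<omega>))) \<in> M \<rightarrow>\<^sub>M count_space UNIV"
    by measurable
  then show "XSj i \<in> borel_measurable M" "XSl i \<in> borel_measurable M" "YS i \<in> M \<rightarrow>\<^sub>M count_space UNIV"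
    by (simp_all add: trip_def)
qed

theorem integral_given_labels:
  "integral\<^sup>L (uniform_measure M E) (\<lambda>\<omega>. pi_hat n YS k \<omega> * tau_hat n XSj XSl YS k \<omega>)
    = real (card S) / real n * cond_tau \<mu> k"
proof -
  have "integral\<^sup>L (uniform_measure M E) (\<lambda>\<omega>. pi_hat n YS k \<omega> * tau_hat n XSj XSl YS k \<omega>)
      = integral\<^sup>L (uniform_measure M E) (\<lambda>\<omega>. real (card S) / real n * given_labels.U \<omega>)"
  proof (rule integral_cong_AE)
    show "(\<lambda>\<omega>. pi_hat n YS k \<omega> * tau_hat n XSj XSl YS k \<omega>) \<in> borel_measurable (uniform_measure M E)"
      using borel_measurable_pi_hat[of n YS M k] borel_measurable_tau_hat[of n XSj M XSl YS k]
        measurable_sample_components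
      by (simp add: measurable_uniform_measure)
    show "(\<lambda>\<omega>. real (card S) / real n * given_labels.U \<omega>) \<in> borel_measurable (uniform_measure M E)"
      by measurable
    show "AE \<omega> in uniform_measure M E.
        pi_hat n YS k \<omega> * tau_hat n XSj XSl YS k \<omega> = real (card S) / real n * given_labels.U \<omega>"
      using E_in_sets by (intro AE_uniform_measureI) (auto simp: pi_hat_on_E tau_hat_on_E)
  qed
  also have "\<dots> = real (card S) / real n * cond_tau \<mu> k"
    by (simp add: given_labels.expectation_U cond_tau_eq_\<theta>)
  finally show ?thesis .
qed

theorem cond_prob_given_labels:
  assumes "0 < \<epsilon>"
  shows "\<P>(\<omega> in M. pi_hat n YS k \<omega> * \<bar>tau_hat n XSj XSl YS k \<omega> - cond_tau \<mu> k\<bar> > \<epsilon>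
      \<bar> (\<forall>i\<in>{1..n}. YS i \<omega> = y i)) \<le> 2 * exp (- real n * \<epsilon>\<^sup>2 / 8)"
proof -
  have "2 \<le> card S" "card S \<le> n"
    using given_labels.two_le_m card_S_le by auto
  define t where "t = real n * \<epsilon> / card S"
  have "0 < t"
    using assms \<open>2 \<le> card S\<close> \<open>card S \<le> n\<close> by (simp add: t_def)
  define B where "B = {\<omega> \<in> space M. t \<le> \<bar>given_labels.U \<omega> - given_labels.\<theta>\<bar>}"
  have "B \<in> events"
    using given_labels.measurable_U unfolding B_def measurable_uniform_measure by measurable
  have tail_subset: "{\<omega> \<in> space M. pi_hat n YS k \<omega> * \<bar>tau_hat n XSj XSl YS k \<omega> - cond_tau \<mu> k\<bar> > \<epsilon>
      \<and> (\<forall>i\<in>{1..n}. YS i \<omega> = y i)} \<subseteq> B"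
  proof safe
    fix \<omega> assume \<omega>: "\<omega> \<in> space M" "\<forall>i\<in>{1..n}. YS i \<omega> = y i"
      and "pi_hat n YS k \<omega> * \<bar>tau_hat n XSj XSl YS k \<omega> - cond_tau \<mu> k\<bar> > \<epsilon>"
    then have "\<epsilon> < card S / n * \<bar>given_labels.U \<omega> - given_labels.\<theta>\<bar>"
      by (simp add: E_def pi_hat_on_E tau_hat_on_E cond_tau_eq_\<theta>)
    then show "\<omega> \<in> B"
      using \<omega> \<open>2 \<le> card S\<close> \<open>card S \<le> n\<close> by (simp add: B_def t_def field_simps)
  qed
  have "\<P>(\<omega> in M. pi_hat n YS k \<omega> * \<bar>tau_hat n XSj XSl YS k \<omega> - cond_tau \<mu> k\<bar> > \<epsilon>
      \<bar> (\<forall>i\<in>{1..n}. YS i \<omega> = y i)) \<le> measure (uniform_measure M E) B"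
    unfolding E_def
    by (rule cond_prob_le_measure_uniform_measure[OF E_in_sets[unfolded E_def] \<open>B \<in> events\<close> tail_subset])
  also have "\<dots> \<le> 2 * exp (- real (card S) * t\<^sup>2 / 8)"
    using given_labels.prob_abs_U_ge[OF \<open>0 < t\<close>] by (simp add: B_def)
  also have "\<dots> \<le> 2 * exp (- real n * \<epsilon>\<^sup>2 / 8)"
  proof -
    have "real n * (real n * \<epsilon>\<^sup>2) \<ge> real (card S) * (real n * \<epsilon>\<^sup>2)"
      using \<open>card S \<le> n\<close> by (intro mult_right_mono) auto
    then have "real n * \<epsilon>\<^sup>2 \<le> real (card S) * t\<^sup>2"
      using \<open>2 \<le> card S\<close> by (simp add: t_def power2_eq_square field_simps)
    then show ?thesis
      by simp
  qed
  finally show ?thesis .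
qed
end

theorem lemma2:
  fixes M :: "'a measure" and n K k :: nat
    and Xj Xl :: "'a \<Rightarrow> real" and Y :: "'a \<Rightarrow> nat"
    and XSj XSl :: "nat \<Rightarrow> 'a \<Rightarrow> real" and YS :: "nat \<Rightarrow> 'a \<Rightarrow> nat"
  assumes "prob_space M"
    and "trip Xj Xl Y \<in> M \<rightarrow>\<^sub>M obs_space"
    and "\<forall>\<omega>\<in>space M. Y \<omega> \<in> {1..K}"
    and "\<forall>i\<in>{1..n}. trip (XSj i) (XSl i) (YS i) \<in> M \<rightarrow>\<^sub>M obs_space"
    and "\<forall>i\<in>{1..n}. distr M obs_space (trip (XSj i) (XSl i) (YS i)) = distr M obs_space (trip Xj Xl Y)"
    and "prob_space.indep_vars M (\<lambda>_. obs_space) (\<lambda>i. trip (XSj i) (XSl i) (YS i)) {1..n}"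
    and "k \<in> {1..K}"
  shows "\<forall>y :: nat \<Rightarrow> nat.
           let E = {\<omega> \<in> space M. \<forall>i\<in>{1..n}. YS i \<omega> = y i};
               nky = card {i \<in> {1..n}. y i = k};
               tau = cond_tau (distr M obs_space (trip Xj Xl Y)) k
           in measure M E > 0 \<and> nky \<ge> 2 \<longrightarrow>
              (integral\<^sup>L (uniform_measure M E) (\<lambda>\<omega>. pi_hat n YS k \<omega> * tau_hat n XSj XSl YS k \<omega>)
                 = real nky / real n * tau)
            \<and> (\<forall>\<epsilon>>0. \<P>(\<omega> in M. pi_hat n YS k \<omega> * \<bar>tau_hat n XSj XSl YS k \<omega> - tau\<bar> > \<epsilon>
                          \<bar> (\<forall>i\<in>{1..n}. YS i \<omega> = y i))
                       \<le> 2 * exp (- real n * \<epsilon>\<^sup>2 / 8))"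
  unfolding Let_def
  apply (intro allI impI)
  subgoal premises labels for y
  proof -
    interpret kendall_given_labels M n k XSj XSl YS "distr M obs_space (trip Xj Xl Y)" y
      using assms(1,5,6) labels
      by (intro kendall_given_labels.intro kendall_given_labels_axioms.intro) auto
    show ?thesis
      using integral_given_labels cond_prob_given_labels by (simp add: E_def S_def)
  qed
  done

end
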